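(* For all $n\ge1$, $a_{\{0112,0120\}}(n)=2^{n-1}+\binom{n+1}{4}$.
   Context: An ascent in an integer sequence $s_1\cdots s_m$ is an index $j$ with $s_j<s_{j+1}$; $\mathrm{asc}$ denotes the number of ascents. An ascent sequence is a sequence $x_1\cdots x_n$ of nonnegative integers with $x_1=0$ and $x_i\le 1+\mathrm{asc}(x_1\cdots x_{i-1})$ for all $i\ge2$. The reduction $\mathrm{red}(w)$ of an integer sequence $w$ replaces the $i$-th smallest distinct letter of $w$ by $i-1$; a pattern is a reduced sequence. A sequence $x$ contains a pattern $p=p_1\cdots p_k$ if there are indices $i_1<\cdots<i_k$ with $\mathrm{red}(x_{i_1}\cdots x_{i_k})=p$; otherwise $x$ avoids $p$. For a finite set $P$ of patterns, $a_P(n)$ denotes the number of ascent sequences of length $n$ avoiding every pattern in $P$. *)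

theory Defs
  imports Main
begin

definition asc :: "nat list \<Rightarrow> nat" where
  "asc s = card {j. Suc j < length s \<and> s ! j < s ! Suc j}"

text \<open>Ascent sequences: x_1 = 0 and x_i \<le> 1 + asc(x_1 ... x_{i-1}) for i \<ge> 2
  (0-indexed here: index i \<ge> 1, prefix take i).\<close>
definition ascent_seq :: "nat list \<Rightarrow> bool" where
  "ascent_seq x \<longleftrightarrow> x \<noteq> [] \<and> x ! 0 = 0 \<and>
     (\<forall>i. 1 \<le> i \<and> i < length x \<longrightarrow> x ! i \<le> 1 + asc (take i x))"

definition red :: "nat list \<Rightarrow> nat list" where
  "red w = map (\<lambda>a. card {b \<in> set w. b < a}) w"

definition contains :: "nat list \<Rightarrow> nat list \<Rightarrow> bool" where
  "contains x p \<longleftrightarrow> (\<exists>is. length is = length p \<and> sorted_wrt (<) is \<and>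
      (\<forall>i\<in>set is. i < length x) \<and> red (map (\<lambda>i. x ! i) is) = p)"

definition avoids :: "nat list \<Rightarrow> nat list \<Rightarrow> bool" where
  "avoids x p \<longleftrightarrow> \<not> contains x p"

definition a_P :: "nat list set \<Rightarrow> nat \<Rightarrow> nat" where
  "a_P P n = card {x. length x = n \<and> ascent_seq x \<and> (\<forall>p\<in>P. avoids x p)}"

end

theory Submission
  imports Defs
begin

text \<open>
  Let x be an ascent sequence avoiding 0112 and 0120. Every 0-1 sequence starting with 0 is such
  a sequence, since both patterns have three distinct letters; there are 2^(n-1) of them. Otherwise consider the first
  letter that is at least 2. Before it the value 1 occurs exactly once (two occurrences of 1
  followed by it would form 0112), so the prefix has a single ascent and the letter is 2; after
  it no 0 occurs (0120). From there on x climbs 2, 3, ..., c, and every later letter lies in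
  {c - 1, c}, because a smaller one would form 0120 and a larger one 0112; for the same reason
  no c follows a c - 1. Hence x = 0^a 1 0^b 2 3 ... c c^p (c-1)^q with a \<ge> 1 and c \<ge> 2.
  Conversely all these sequences are avoiding ascent sequences, and they correspond to the weak
  compositions (a - 1, b, c - 2, p) of numbers at most n - 3, of which there are
  (n + 1) choose 4.
\<close>

section \<open>Pattern containment\<close>

lemma red_nth_less_iff:
  assumes "i < length w" "j < length w"
  shows "red w ! i < red w ! j \<longleftrightarrow> w ! i < w ! j"
proof -
  have "card {b \<in> set w. b < u} < card {b \<in> set w. b < v} \<longleftrightarrow> u < v" if "u \<in> set w" for u v
  proof
    assume "u < v"
    then have "{b \<in> set w. b < u} \<subset> {b \<in> set w. b < v}" using that by auto
    then show "card {b \<in> set w. b < u} < card {b \<in> set w. b < v}" by (simp add: psubset_card_mono)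
  next
    assume "card {b \<in> set w. b < u} < card {b \<in> set w. b < v}"
    moreover have "\<not> u < v \<Longrightarrow> card {b \<in> set w. b < v} \<le> card {b \<in> set w. b < u}"
      by (rule card_mono) auto
    ultimately show "u < v" by linarith
  qed
  then show ?thesis using assms by (simp add: red_def)
qed

lemma contains_length4_iff:
  "contains x [p0, p1, p2, p3] \<longleftrightarrow>
    (\<exists>i j k l. i < j \<and> j < k \<and> k < l \<and> l < length x \<and>
      red [x ! i, x ! j, x ! k, x ! l] = [p0, p1, p2, p3])"
  (is "_ \<longleftrightarrow> ?indices")
proof
  assume "contains x [p0, p1, p2, p3]"
  then obtain "is" where "length is = length [p0, p1, p2, p3]" "sorted_wrt (<) is"
      "\<forall>i\<in>set is. i < length x" "red (map ((!) x) is) = [p0, p1, p2, p3]"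
    unfolding contains_def by blast
  then show ?indices
    by (clarsimp simp: length_Suc_conv) blast
next
  assume ?indices
  then obtain i j k l where "i < j" "j < k" "k < l" "l < length x"
      "red [x ! i, x ! j, x ! k, x ! l] = [p0, p1, p2, p3]"
    by blast
  then show "contains x [p0, p1, p2, p3]"
    unfolding contains_def by (intro exI[of _ "[i, j, k, l]"]) auto
qed

lemma red_eq_0112_iff: "red [a, b, c, d] = [0, 1, 1, 2] \<longleftrightarrow> a < b \<and> b = c \<and> c < d"
proof
  assume red: "red [a, b, c, d] = [0, 1, 1, 2]"
  have "[a, b, c, d] ! i < [a, b, c, d] ! j \<longleftrightarrow> [0::nat, 1, 1, 2] ! i < [0, 1, 1, 2] ! j"
    if "i < 4" "j < 4" for i j
    using red_nth_less_iff[of i "[a, b, c, d]" j] that by (simp add: red)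
  from this[of 0 1] this[of 1 2] this[of 2 1] this[of 2 3] show "a < b \<and> b = c \<and> c < d" by simp
next
  assume "a < b \<and> b = c \<and> c < d"
  then have "{e \<in> set [a, b, c, d]. e < a} = {}" "{e \<in> set [a, b, c, d]. e < b} = {a}"
      "{e \<in> set [a, b, c, d]. e < d} = {a, b}"
    by auto
  then show "red [a, b, c, d] = [0, 1, 1, 2]"
    using \<open>a < b \<and> b = c \<and> c < d\<close> unfolding red_def by (simp only: list.map) simp
qed

lemma red_eq_0120_iff: "red [a, b, c, d] = [0, 1, 2, 0] \<longleftrightarrow> a < b \<and> b < c \<and> d = a"
proof
  assume red: "red [a, b, c, d] = [0, 1, 2, 0]"
  have "[a, b, c, d] ! i < [a, b, c, d] ! j \<longleftrightarrow> [0::nat, 1, 2, 0] ! i < [0, 1, 2, 0] ! j"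
    if "i < 4" "j < 4" for i j
    using red_nth_less_iff[of i "[a, b, c, d]" j] that by (simp add: red)
  from this[of 0 1] this[of 1 2] this[of 0 3] this[of 3 0] show "a < b \<and> b < c \<and> d = a" by simp
next
  assume "a < b \<and> b < c \<and> d = a"
  then have "{e \<in> set [a, b, c, d]. e < a} = {}" "{e \<in> set [a, b, c, d]. e < b} = {a}"
      "{e \<in> set [a, b, c, d]. e < c} = {a, b}"
    by auto
  then show "red [a, b, c, d] = [0, 1, 2, 0]"
    using \<open>a < b \<and> b < c \<and> d = a\<close> unfolding red_def by (simp only: list.map) simp
qed

lemma contains_0112_iff:
  "contains x [0, 1, 1, 2] \<longleftrightarrow>
    (\<exists>i j k l. i < j \<and> j < k \<and> k < l \<and> l < length x \<and> x ! i < x ! j \<and> x ! j = x ! k \<and> x ! k < x ! l)"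
  unfolding contains_length4_iff red_eq_0112_iff ..

lemma contains_0120_iff:
  "contains x [0, 1, 2, 0] \<longleftrightarrow>
    (\<exists>i j k l. i < j \<and> j < k \<and> k < l \<and> l < length x \<and> x ! i < x ! j \<and> x ! j < x ! k \<and> x ! l = x ! i)"
  unfolding contains_length4_iff red_eq_0120_iff ..

definition ascents :: "nat list \<Rightarrow> nat \<Rightarrow> nat set" where
  "ascents x i = {j. Suc j < i \<and> x ! j < x ! Suc j}"

lemma finite_ascents [simp]: "finite (ascents x i)"
  unfolding ascents_def by (rule finite_subset[of _ "{..<i}"]) auto

lemma asc_take: "i \<le> length x \<Longrightarrow> asc (take i x) = card (ascents x i)"
  unfolding asc_def ascents_def by (rule arg_cong[where f = card]) auto

lemma ascents_map_upt:
  "i \<le> n \<Longrightarrow> ascents (map f [0..<n]) i = {j. Suc j < i \<and> f j < f (Suc j)}"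
  unfolding ascents_def by auto

lemma ascent_seq_iff:
  "ascent_seq x \<longleftrightarrow>
    x \<noteq> [] \<and> x ! 0 = 0 \<and> (\<forall>i. 1 \<le> i \<and> i < length x \<longrightarrow> x ! i \<le> 1 + card (ascents x i))"
  unfolding ascent_seq_def by (auto simp: asc_take)

section \<open>Stair sequences\<close>

text \<open>The list map (stair a b c p) [0..<n] is 0^a 1 0^b 2 3 ... c c^p (c-1)(c-1)..., cut at length n.\<close>

definition stair :: "nat \<Rightarrow> nat \<Rightarrow> nat \<Rightarrow> nat \<Rightarrow> nat \<Rightarrow> nat" where
  "stair a b c p i =
    (if i < a then 0 else if i = a then 1 else if i \<le> a + b then 0
     else if i < a + b + c then i + 1 - (a + b) else if i < a + b + c + p then c else c - 1)"

definition stair_params :: "nat \<Rightarrow> (nat \<times> nat \<times> nat \<times> nat) set" where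
  "stair_params n = {(a, b, c, p). 1 \<le> a \<and> 2 \<le> c \<and> a + b + c + p \<le> n}"

definition stair_seqs :: "nat \<Rightarrow> nat list set" where
  "stair_seqs n = (\<lambda>(a, b, c, p). map (stair a b c p) [0..<n]) ` stair_params n"

lemma stair_no_0112:
  assumes "i < j" "j < k" "k < l"
    and "stair a b c p i < stair a b c p j" "stair a b c p j = stair a b c p k"
    and "stair a b c p k < stair a b c p l"
  shows False
  using assms unfolding stair_def by (auto split: if_splits)

lemma stair_no_0120:
  assumes "i < j" "j < k" "k < l"
    and "stair a b c p i < stair a b c p j" "stair a b c p j < stair a b c p k"
    and "stair a b c p l = stair a b c p i"
  shows False
  using assms unfolding stair_def by (auto split: if_splits)

lemma stair_le_ascents:
  assumes "1 \<le> a" "1 \<le> i" "i \<le> n"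
  shows "stair a b c p i \<le> 1 + card (ascents (map (stair a b c p) [0..<n]) i)"
proof (cases "stair a b c p i \<le> 1")
  case False
  let ?f = "stair a b c p"
  have "a + b < i" using False unfolding stair_def by (auto split: if_splits)
  define m where "m = min i (a + b + c)"
  \<comment> \<open>the ascent into the 1 and the ascents up the staircase already pay for the value at i\<close>
  let ?K = "insert (a - 1) {a + b..<m - 1}"
  have "?K \<subseteq> {j. Suc j < i \<and> ?f j < ?f (Suc j)}"
    using assms \<open>a + b < i\<close> unfolding m_def stair_def by (auto split: if_splits)
  then have K_ascents: "?K \<subseteq> ascents (map ?f [0..<n]) i"
    using ascents_map_upt[OF \<open>i \<le> n\<close>] by simp
  have "?f i \<le> 1 + card ?K"
    using assms \<open>a + b < i\<close> False unfolding m_def stair_def by (auto split: if_splits)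
  also have "card ?K \<le> card (ascents (map ?f [0..<n]) i)"
    using K_ascents by (rule card_mono[OF finite_ascents])
  finally show ?thesis by simp
qed simp

definition avoiders :: "nat \<Rightarrow> nat list set" where
  "avoiders n =
    {x. length x = n \<and> ascent_seq x \<and> \<not> contains x [0, 1, 1, 2] \<and> \<not> contains x [0, 1, 2, 0]}"

definition binary_seqs :: "nat \<Rightarrow> nat list set" where
  "binary_seqs n = {x. length x = n \<and> x ! 0 = 0 \<and> set x \<subseteq> {0, 1}}"

lemma stair_seqs_subset_avoiders: "stair_seqs n \<subseteq> avoiders n"
proof
  fix x assume "x \<in> stair_seqs n"
  then obtain a b c p where params: "1 \<le> a" "2 \<le> c" "a + b + c + p \<le> n"
    and x: "x = map (stair a b c p) [0..<n]"
    unfolding stair_seqs_def stair_params_def by auto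
  have "ascent_seq x"
    unfolding ascent_seq_iff using params stair_le_ascents[OF params(1)] by (auto simp: x stair_def)
  moreover have "\<not> contains x [0, 1, 1, 2]"
    unfolding contains_0112_iff using stair_no_0112 by (auto simp: x)
  moreover have "\<not> contains x [0, 1, 2, 0]"
    unfolding contains_0120_iff using stair_no_0120 by (auto simp: x)
  ultimately show "x \<in> avoiders n"
    unfolding avoiders_def using x by simp
qed

lemma binary_seqs_subset_avoiders:
  assumes "1 \<le> n"
  shows "binary_seqs n \<subseteq> avoiders n"
proof
  fix x assume "x \<in> binary_seqs n"
  then have x: "length x = n" "x ! 0 = 0" "set x \<subseteq> {0, 1}"
    unfolding binary_seqs_def by auto
  have le_1: "x ! i \<le> 1" if "i < n" for i
  proof -
    have "x ! i \<in> {0, 1}" using nth_mem[of i x] that x by blast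
    then show ?thesis by auto
  qed
  have no_chain: False if "x ! i < x ! j" "x ! j < x ! k" "i < n" "j < n" "k < n" for i j k
    using le_1[OF that(3)] le_1[OF that(4)] le_1[OF that(5)] that(1,2) by linarith
  have "ascent_seq x"
    unfolding ascent_seq_iff using assms x le_1 by fastforce
  moreover have "\<not> contains x [0, 1, 1, 2]" "\<not> contains x [0, 1, 2, 0]"
    unfolding contains_0112_iff contains_0120_iff using x(1) by (auto intro: no_chain)
  ultimately show "x \<in> avoiders n"
    unfolding avoiders_def using x by simp
qed

section \<open>Avoiders with a letter greater than 1\<close>

text \<open>
  The positions defined below locate the shape x = 0^a 1 0^b 2 3 ... c c^p (c-1)^q:
  one_pos = a, start = a + b + 1, peak = c, stair_end = a + b + c and tail_start = a + b + c + p.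
\<close>

locale nonbinary_avoider =
  fixes x :: "nat list"
  assumes ascent: "ascent_seq x"
    and avoids_0112: "\<not> contains x [0, 1, 1, 2]"
    and avoids_0120: "\<not> contains x [0, 1, 2, 0]"
    and not_binary: "\<not> set x \<subseteq> {0, 1}"
begin

lemma no_0112:
  "\<lbrakk>i < j; j < k; k < l; l < length x; x ! i < x ! j; x ! j = x ! k; x ! k < x ! l\<rbrakk> \<Longrightarrow> False"
  using avoids_0112 unfolding contains_0112_iff by blast

lemma no_0120:
  "\<lbrakk>i < j; j < k; k < l; l < length x; x ! i < x ! j; x ! j < x ! k; x ! l = x ! i\<rbrakk> \<Longrightarrow> False"
  using avoids_0120 unfolding contains_0120_iff by blast

lemma nth_0: "x ! 0 = 0"
  using ascent unfolding ascent_seq_iff by blast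

lemma nth_le_ascents: "1 \<le> i \<Longrightarrow> i < length x \<Longrightarrow> x ! i \<le> 1 + card (ascents x i)"
  using ascent unfolding ascent_seq_iff by blast

definition start :: nat where
  "start = (LEAST i. i < length x \<and> 2 \<le> x ! i)"

lemma start: "start < length x" "2 \<le> x ! start"
proof -
  obtain i where "i < length x" "2 \<le> x ! i"
    using not_binary by (auto simp: in_set_conv_nth subset_iff)
  then show "start < length x" "2 \<le> x ! start"
    using LeastI[of "\<lambda>i. i < length x \<and> 2 \<le> x ! i"] unfolding start_def by blast+
qed

lemma nth_before_start: "i < start \<Longrightarrow> x ! i \<le> 1"
  using not_less_Least[of i "\<lambda>i. i < length x \<and> 2 \<le> x ! i"] start(1)
  unfolding start_def[symmetric] by auto

definition one_pos :: nat where
  "one_pos = (LEAST i. i < start \<and> x ! i = 1)"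

lemma one_pos: "1 \<le> one_pos" "one_pos < start" "x ! one_pos = 1"
proof -
  have "1 \<le> start" using start nth_0 by (cases start) auto
  then have "ascents x start \<noteq> {}"
    using nth_le_ascents[of start] start by auto
  then obtain j where "Suc j < start" "x ! j < x ! Suc j"
    unfolding ascents_def by blast
  then have "Suc j < start \<and> x ! Suc j = 1"
    using nth_before_start[of "Suc j"] by simp
  then have "one_pos < start \<and> x ! one_pos = 1"
    unfolding one_pos_def by (rule LeastI)
  then show "one_pos < start" "x ! one_pos = 1" by auto
  with nth_0 show "1 \<le> one_pos" by (cases one_pos) auto
qed

lemma nth_before_start_eq_0: "i < start \<Longrightarrow> i \<noteq> one_pos \<Longrightarrow> x ! i = 0"
proof (rule ccontr)
  assume "i < start" "i \<noteq> one_pos" "x ! i \<noteq> 0"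
  then have "x ! i = 1" "0 < i"
    using nth_before_start[of i] nth_0 by (auto intro: gr0I)
  then show False
    using no_0112[of 0 i one_pos start] no_0112[of 0 one_pos i start] \<open>i < start\<close> \<open>i \<noteq> one_pos\<close>
      one_pos start nth_0 by (cases "i < one_pos") auto
qed

lemma nth_start: "x ! start = 2"
proof -
  have "ascents x start \<subseteq> {one_pos - 1}"
    using nth_before_start_eq_0 unfolding ascents_def by fastforce
  then have "card (ascents x start) \<le> 1"
    using card_mono[of "{one_pos - 1}"] by fastforce
  then show ?thesis
    using nth_le_ascents[of start] start one_pos by simp
qed

lemma after_start_ge_1: "start < i \<Longrightarrow> i < length x \<Longrightarrow> 1 \<le> x ! i"
  using no_0120[of 0 one_pos start i] one_pos nth_0 nth_start by (auto intro: Suc_leI gr0I)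

definition stair_end :: nat where
  "stair_end = (LEAST i. start < i \<and> (i = length x \<or> x ! i \<noteq> i + 2 - start))"

lemma stair_end:
  "start < stair_end" "stair_end \<le> length x"
  "stair_end < length x \<Longrightarrow> x ! stair_end \<noteq> stair_end + 2 - start"
proof -
  let ?P = "\<lambda>i. start < i \<and> (i = length x \<or> x ! i \<noteq> i + 2 - start)"
  show "start < stair_end" "stair_end < length x \<Longrightarrow> x ! stair_end \<noteq> stair_end + 2 - start"
    using LeastI[of ?P "length x"] start unfolding stair_end_def by auto
  show "stair_end \<le> length x"
    using Least_le[of ?P "length x"] start unfolding stair_end_def by auto
qed

lemma nth_stair: "start \<le> i \<Longrightarrow> i < stair_end \<Longrightarrow> x ! i = i + 2 - start"
  using not_less_Least[of i "\<lambda>i. start < i \<and> (i = length x \<or> x ! i \<noteq> i + 2 - start)"]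
    nth_start stair_end(2) unfolding stair_end_def[symmetric] by (cases "i = start") auto


definition peak :: nat where
  "peak = stair_end + 1 - start"

lemma peak_ge_2: "2 \<le> peak"
  using stair_end(1) unfolding peak_def by simp

definition occ :: "nat \<Rightarrow> nat" where
  "occ v = (if v = 1 then one_pos else start + v - 2)"

lemma occ: "1 \<le> v \<Longrightarrow> v \<le> peak \<Longrightarrow> 1 \<le> occ v \<and> occ v < stair_end \<and> x ! occ v = v"
  using one_pos stair_end(1) nth_stair[of "start + v - 2"] unfolding occ_def peak_def by auto

lemma occ_mono: "1 \<le> v \<Longrightarrow> v < w \<Longrightarrow> occ v < occ w"
  using one_pos unfolding occ_def by auto

lemma after_stair_ge: "stair_end \<le> i \<Longrightarrow> i < length x \<Longrightarrow> peak - 1 \<le> x ! i"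
proof (rule ccontr)
  assume i: "stair_end \<le> i" "i < length x" and "\<not> peak - 1 \<le> x ! i"
  then have "1 \<le> x ! i" "x ! i + 1 < peak"
    using after_start_ge_1[of i] stair_end(1) by auto
  then show False
    using no_0120[of "occ (x ! i)" "occ (x ! i + 1)" "occ peak" i] i
      occ[of "x ! i"] occ[of "x ! i + 1"] occ[of peak] occ_mono[of "x ! i" "x ! i + 1"] occ_mono[of "x ! i + 1" peak]
    by auto
qed

lemma nth_stair_end_le: "stair_end < length x \<Longrightarrow> x ! stair_end \<le> peak"
proof -
  assume "stair_end < length x"
  have "j \<in> insert (one_pos - 1) {start - 1..<stair_end - 1}"
    if "Suc j < stair_end" "x ! j < x ! Suc j" for j
  proof (cases "Suc j < start")
    case True
    then have "Suc j = one_pos" using nth_before_start_eq_0[of "Suc j"] that(2) by fastforce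
    then show ?thesis by auto
  qed (use that in auto)
  then have "ascents x stair_end \<subseteq> insert (one_pos - 1) {start - 1..<stair_end - 1}"
    unfolding ascents_def by blast
  then have "card (ascents x stair_end) \<le> card (insert (one_pos - 1) {start - 1..<stair_end - 1})"
    by (rule card_mono[rotated]) simp
  also have "\<dots> \<le> peak"
    using card_insert_le_m1 stair_end(1) one_pos unfolding peak_def by (simp add: card_insert_if)
  finally show ?thesis
    using nth_le_ascents[of stair_end] stair_end \<open>stair_end < length x\<close> unfolding peak_def by fastforce
qed

lemma after_stair_le: "stair_end \<le> i \<Longrightarrow> i < length x \<Longrightarrow> x ! i \<le> peak"
proof (rule ccontr)
  assume i: "stair_end \<le> i" "i < length x" "\<not> x ! i \<le> peak"
  then have "stair_end < i" "stair_end < length x"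
    using nth_stair_end_le by (cases "i = stair_end"; simp)+
  let ?w = "x ! stair_end"
  have "peak - 1 \<le> ?w" "?w \<le> peak"
    using after_stair_ge[of stair_end] nth_stair_end_le \<open>stair_end < length x\<close> by auto
  then have "1 \<le> occ ?w" "occ ?w < stair_end" "x ! occ ?w = ?w" "0 < ?w"
    using occ[of ?w] peak_ge_2 by auto
  then show False
    using no_0112[of 0 "occ ?w" stair_end i] i \<open>stair_end < i\<close> \<open>?w \<le> peak\<close> nth_0 by auto
qed

lemma no_peak_after_drop:
  "stair_end \<le> i \<Longrightarrow> i < j \<Longrightarrow> j < length x \<Longrightarrow> x ! i = peak - 1 \<Longrightarrow> x ! j \<noteq> peak"
proof
  assume "stair_end \<le> i" "i < j" "j < length x" "x ! i = peak - 1" "x ! j = peak"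
  moreover have "1 \<le> occ (peak - 1)" "occ (peak - 1) < stair_end" "x ! occ (peak - 1) = peak - 1"
    using occ[of "peak - 1"] peak_ge_2 by auto
  ultimately show False
    using no_0112[of 0 "occ (peak - 1)" i j] peak_ge_2 nth_0 by auto
qed


definition tail_start :: nat where
  "tail_start = (LEAST i. stair_end \<le> i \<and> (i = length x \<or> x ! i = peak - 1))"

lemma tail_start:
  "stair_end \<le> tail_start" "tail_start \<le> length x"
  "tail_start < length x \<Longrightarrow> x ! tail_start = peak - 1"
proof -
  let ?P = "\<lambda>i. stair_end \<le> i \<and> (i = length x \<or> x ! i = peak - 1)"
  show "stair_end \<le> tail_start" "tail_start < length x \<Longrightarrow> x ! tail_start = peak - 1"
    using LeastI[of ?P "length x"] stair_end(2) unfolding tail_start_def by auto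
  show "tail_start \<le> length x"
    using Least_le[of ?P "length x"] stair_end(2) unfolding tail_start_def by auto
qed

lemma nth_plateau: "stair_end \<le> i \<Longrightarrow> i < tail_start \<Longrightarrow> x ! i = peak"
  using not_less_Least[of i "\<lambda>i. stair_end \<le> i \<and> (i = length x \<or> x ! i = peak - 1)"]
    after_stair_ge[of i] after_stair_le[of i] tail_start(2)
  unfolding tail_start_def[symmetric] by auto

lemma nth_tail: "tail_start \<le> i \<Longrightarrow> i < length x \<Longrightarrow> x ! i = peak - 1"
  using no_peak_after_drop[of tail_start i] tail_start after_stair_ge[of i] after_stair_le[of i]
  by (cases "i = tail_start") auto

lemma eq_map_stair:
  "x = map (stair one_pos (start - one_pos - 1) peak (tail_start - stair_end)) [0..<length x]"
proof (rule nth_equalityI)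
  fix i assume "i < length x"
  then consider "i < start" | "start \<le> i" "i < stair_end" | "stair_end \<le> i" "i < tail_start"
    | "tail_start \<le> i" by linarith
  then show "x ! i = map (stair one_pos (start - one_pos - 1) peak (tail_start - stair_end)) [0..<length x] ! i"
  proof cases
    case 1
    then show ?thesis
      using nth_before_start_eq_0[of i] one_pos \<open>i < length x\<close> unfolding stair_def by auto
  next
    case 2
    then show ?thesis
      using nth_stair[of i] one_pos \<open>i < length x\<close> unfolding stair_def peak_def by auto
  next
    case 3
    then show ?thesis
      using nth_plateau[of i] one_pos stair_end(1) \<open>i < length x\<close> unfolding stair_def peak_def by auto
  next
    case 4
    then show ?thesis
      using nth_tail[of i] one_pos stair_end(1) tail_start \<open>i < length x\<close>
      unfolding stair_def peak_def by auto
  qed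
qed simp

lemma in_stair_seqs: "x \<in> stair_seqs (length x)"
proof -
  have "(one_pos, start - one_pos - 1, peak, tail_start - stair_end) \<in> stair_params (length x)"
    using one_pos peak_ge_2 tail_start stair_end(1) unfolding stair_params_def peak_def by auto
  then show ?thesis
    unfolding stair_seqs_def by (rule rev_image_eqI) (simp only: prod.case, rule eq_map_stair)
qed

end

section \<open>Counting\<close>

lemma avoiders_eq: "1 \<le> n \<Longrightarrow> avoiders n = binary_seqs n \<union> stair_seqs n"
proof
  show "avoiders n \<subseteq> binary_seqs n \<union> stair_seqs n"
  proof
    fix x assume x: "x \<in> avoiders n"
    show "x \<in> binary_seqs n \<union> stair_seqs n"
    proof (cases "set x \<subseteq> {0, 1}")
      case True
      then show ?thesis
        using x unfolding avoiders_def binary_seqs_def ascent_seq_def by auto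
    next
      case False
      then interpret nonbinary_avoider x
        using x unfolding avoiders_def by unfold_locales auto
      show ?thesis
        using in_stair_seqs x unfolding avoiders_def by auto
    qed
  qed
qed (use binary_seqs_subset_avoiders stair_seqs_subset_avoiders in auto)

lemma binary_seqs_disjoint_stair_seqs: "binary_seqs n \<inter> stair_seqs n = {}"
proof -
  have "2 \<in> set (map (stair a b c p) [0..<n])" if "(a, b, c, p) \<in> stair_params n" for a b c p
  proof -
    have "a + b + 1 < n" "stair a b c p (a + b + 1) = 2"
      using that unfolding stair_params_def stair_def by auto
    then show ?thesis by (auto simp: image_iff intro: bexI[of _ "a + b + 1"])
  qed
  then show ?thesis
    unfolding binary_seqs_def stair_seqs_def by fastforce
qed

lemma card_binary_seqs:
  assumes "1 \<le> n"
  shows "card (binary_seqs n) = 2 ^ (n - 1)"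
proof -
  have "binary_seqs n = (#) 0 ` {ys. set ys \<subseteq> {0, 1} \<and> length ys = n - 1}"
  proof
    show "binary_seqs n \<subseteq> (#) 0 ` {ys. set ys \<subseteq> {0, 1} \<and> length ys = n - 1}"
    proof
      fix x assume "x \<in> binary_seqs n"
      with assms show "x \<in> (#) 0 ` {ys. set ys \<subseteq> {0, 1} \<and> length ys = n - 1}"
        unfolding binary_seqs_def by (cases x) auto
    qed
  qed (use assms in \<open>auto simp: binary_seqs_def\<close>)
  then have "card (binary_seqs n) = card {ys :: nat list. set ys \<subseteq> {0, 1} \<and> length ys = n - 1}"
    by (simp add: card_image)
  then show ?thesis
    by (simp add: card_lists_length_eq numeral_2_eq_2)
qed

lemma card_sum_list_le: "card {xs :: nat list. length xs = k \<and> sum_list xs \<le> m} = (m + k) choose k"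
proof (induction k arbitrary: m)
  case 0
  have "{xs :: nat list. length xs = 0 \<and> sum_list xs \<le> m} = {[]}" by auto
  then show ?case by simp
next
  case (Suc k)
  let ?L = "\<lambda>j. {ys :: nat list. length ys = k \<and> sum_list ys \<le> j}"
  let ?cons = "\<lambda>(j, ys). (m - j) # ys"
  have finite_L: "finite (?L j)" for j
    by (rule finite_subset[of _ "{ys. set ys \<subseteq> {..j} \<and> length ys = k}"])
      (auto simp: finite_lists_length_eq dest: member_le_sum_list)
  have "{xs. length xs = Suc k \<and> sum_list xs \<le> m} = ?cons ` (SIGMA j:{..m}. ?L j)"
  proof
    show "{xs. length xs = Suc k \<and> sum_list xs \<le> m} \<subseteq> ?cons ` (SIGMA j:{..m}. ?L j)"
    proof
      fix xs assume "xs \<in> {xs. length xs = Suc k \<and> sum_list xs \<le> m}"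
      then obtain a ys where "xs = a # ys" "length ys = k" "a + sum_list ys \<le> m"
        by (auto simp: length_Suc_conv)
      then show "xs \<in> ?cons ` (SIGMA j:{..m}. ?L j)"
        by (intro image_eqI[of _ _ "(m - a, ys)"]) auto
    qed
  qed auto
  moreover have "inj_on ?cons (SIGMA j:{..m}. ?L j)"
    by (auto simp: inj_on_def)
  ultimately have "card {xs. length xs = Suc k \<and> sum_list xs \<le> m} = (\<Sum>j\<le>m. card (?L j))"
    by (simp add: card_image card_SigmaI finite_L)
  also have "\<dots> = (\<Sum>j\<le>m. (j + k) choose k)"
    using Suc.IH by simp
  also have "\<dots> = (m + Suc k) choose Suc k"
    by (induction m) (simp_all add: add.commute)
  finally show ?case .
qed

lemma card_stair_params: "card (stair_params n) = (n + 1) choose 4"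
proof (cases "3 \<le> n")
  case True
  let ?f = "\<lambda>(a, b, c, p). [a - 1, b, c - 2, p]"
  have "bij_betw ?f (stair_params n) {xs. length xs = 4 \<and> sum_list xs \<le> n - 3}"
  proof (rule bij_betw_imageI)
    show "inj_on ?f (stair_params n)"
      by (auto simp: inj_on_def stair_params_def)
    show "?f ` stair_params n = {xs. length xs = 4 \<and> sum_list xs \<le> n - 3}"
    proof
      show "{xs. length xs = 4 \<and> sum_list xs \<le> n - 3} \<subseteq> ?f ` stair_params n"
      proof
        fix xs assume "xs \<in> {xs. length xs = 4 \<and> sum_list xs \<le> n - 3}"
        then obtain a b c p where "xs = [a, b, c, p]" "a + b + c + p \<le> n - 3"
          by (auto simp: length_Suc_conv numeral_eq_Suc)
        then show "xs \<in> ?f ` stair_params n"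
          by (intro image_eqI[of _ _ "(a + 1, b, c + 2, p)"]) (use True in \<open>auto simp: stair_params_def\<close>)
      qed
    qed (auto simp: stair_params_def)
  qed
  then have "card (stair_params n) = (n - 3 + 4) choose 4"
    using card_sum_list_le[of 4 "n - 3"] by (simp add: bij_betw_same_card)
  with True show ?thesis by simp
next
  case False
  then have "stair_params n = {}" by (auto simp: stair_params_def)
  with False show ?thesis by simp
qed


lemma stair_params_lex_not_less:
  assumes "(a, b, c, p) \<in> stair_params n" "(a', b', c', p') \<in> stair_params n"
    and eq: "\<And>i. i < n \<Longrightarrow> stair a b c p i = stair a' b' c' p' i"
  shows "\<not> a < a'" "a = a' \<Longrightarrow> \<not> b < b'" "a = a' \<Longrightarrow> b = b' \<Longrightarrow> \<not> c < c'"
    "a = a' \<Longrightarrow> b = b' \<Longrightarrow> c = c' \<Longrightarrow> \<not> p < p'"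
  using eq[of a] eq[of "a + b + 1"] eq[of "a + b + c"] eq[of "a + b + c + p"] assms(1,2)
  unfolding stair_params_def stair_def by (auto split: if_splits)

lemma stair_params_unique:
  assumes "(a, b, c, p) \<in> stair_params n" "(a', b', c', p') \<in> stair_params n"
    and "\<And>i. i < n \<Longrightarrow> stair a b c p i = stair a' b' c' p' i"
  shows "(a, b, c, p) = (a', b', c', p')"
  using stair_params_lex_not_less[OF assms] stair_params_lex_not_less[OF assms(2,1)] assms(3)
  by (metis linorder_neqE_nat)

lemma card_stair_seqs: "card (stair_seqs n) = (n + 1) choose 4"
proof -
  have "inj_on (\<lambda>(a, b, c, p). map (stair a b c p) [0..<n]) (stair_params n)"
  proof (rule inj_onI)
    fix u v
    assume "u \<in> stair_params n" "v \<in> stair_params n"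
      and "(\<lambda>(a, b, c, p). map (stair a b c p) [0..<n]) u = (\<lambda>(a, b, c, p). map (stair a b c p) [0..<n]) v"
    moreover obtain a b c p a' b' c' p' where "u = (a, b, c, p)" "v = (a', b', c', p')"
      by (metis prod_cases4)
    ultimately show "u = v"
      using stair_params_unique[of a b c p n a' b' c' p'] by (simp add: map_eq_conv)
  qed
  then show ?thesis
    unfolding stair_seqs_def by (simp add: card_image card_stair_params)
qed

lemma finite_binary_seqs: "finite (binary_seqs n)"
  by (rule finite_subset[of _ "{xs. set xs \<subseteq> {0, 1} \<and> length xs = n}"])
    (auto simp: binary_seqs_def finite_lists_length_eq)

lemma finite_stair_seqs: "finite (stair_seqs n)"
  unfolding stair_seqs_def stair_params_def
  by (rule finite_imageI, rule finite_subset[of _ "{..n} \<times> {..n} \<times> {..n} \<times> {..n}"]) auto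

theorem theorem3p6:
  fixes n :: nat
  assumes "n \<ge> 1"
  shows "a_P {[0,1,1,2], [0,1,2,0]} n = 2 ^ (n - 1) + ((n + 1) choose 4)"
proof -
  have "a_P {[0,1,1,2], [0,1,2,0]} n = card (avoiders n)"
    unfolding a_P_def avoiders_def avoids_def by simp
  also have "\<dots> = card (binary_seqs n) + card (stair_seqs n)"
    unfolding avoiders_eq[OF assms]
    using finite_binary_seqs finite_stair_seqs binary_seqs_disjoint_stair_seqs
    by (rule card_Un_disjoint)
  also have "\<dots> = 2 ^ (n - 1) + ((n + 1) choose 4)"
    using card_binary_seqs[OF assms] card_stair_seqs by simp
  finally show ?thesis .
qed

end
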